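(* Let $\mathcal L:\sum_{i=1}^kc_ix_i=0$ be a homogeneous linear equation with $k\ge3$ and nonzero integer coefficients, and let $\mathcal G$ be a class of finite abelian groups. Suppose $\delta_{\mathrm{VC}}(\mathcal L)=0$ with respect to $\mathcal G$. Then for every $\alpha>0$ there is $K=K(\alpha,\mathcal L)$ such that for every $\Gamma\in\mathcal G$ and every $\mathcal L$-solution-free $A\subseteq\Gamma$ with $|A|\ge\alpha|\Gamma|$, there is $T\subseteq\Gamma$ with $|T|\le K$ and $A+T=\Gamma$ (i.e. $A$ is syndetic).
   Context: $A\subseteq\Gamma$ is $\mathcal L$-solution-free if there is no $(x_1,\dots,x_k)\in A^k$ with pairwise distinct entries and $\sum_ic_ix_i=0$. $\mathrm{VC}(\mathsf{Cay}(\Gamma,A))$ denotes the VC dimension of the set system $\{x-A:x\in\Gamma\}$ on ground set $\Gamma$ (the neighborhoods in the Cayley graph). The VC-dimension threshold is $\delta_{\mathrm{VC}}(\mathcal L)=\inf\{\alpha\ge0:\exists C(\alpha,\mathcal L)$ such that for every $\Gamma\in\mathcal G$ and every $\mathcal L$-solution-free $A\subseteq\Gamma$ with $|A|\ge\alpha|\Gamma|$, $\mathrm{VC}(\mathsf{Cay}(\Gamma,A))\le C\}$. *)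

theory Defs
  imports "HOL-Algebra.Algebra" "HOL-Analysis.Analysis"
begin

text \<open>Linear equation L: sum_{i<k} c_i x_i = 0, given by the coefficient list cs
  (k = length cs).  Groups are abelian groups in HOL-Algebra, written
  multiplicatively: the equation reads prod_i x_i^(c_i) = 1.\<close>

definition solution_free :: "('a, 'b) monoid_scheme \<Rightarrow> int list \<Rightarrow> 'a set \<Rightarrow> bool" where
  "solution_free G cs A \<longleftrightarrow>
     \<not> (\<exists>x :: nat \<Rightarrow> 'a. (\<forall>i<length cs. x i \<in> A) \<and> inj_on x {..<length cs} \<and>
          finprod G (\<lambda>i. x i [^]\<^bsub>G\<^esub> (cs ! i)) {..<length cs} = \<one>\<^bsub>G\<^esub>)"

text \<open>Translate x - A (additive), i.e. { x * a^{-1} : a in A }.\<close>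
definition neg_translate :: "('a, 'b) monoid_scheme \<Rightarrow> 'a \<Rightarrow> 'a set \<Rightarrow> 'a set" where
  "neg_translate G x A = (\<lambda>a. x \<otimes>\<^bsub>G\<^esub> inv\<^bsub>G\<^esub> a) ` A"

definition shatters :: "'a set set \<Rightarrow> 'a set \<Rightarrow> bool" where
  "shatters F S \<longleftrightarrow> (\<lambda>B. S \<inter> B) ` F = Pow S"

definition vc_dim :: "'a set \<Rightarrow> 'a set set \<Rightarrow> nat" where
  "vc_dim Gr F = Complete_Lattices.Sup (card ` {Y. Y \<subseteq> Gr \<and> finite Y \<and> shatters F Y})"

text \<open>VC dimension of the Cayley graph Cay(G, A): set system {x - A : x in G} on G.\<close>
definition vc_cayley :: "('a, 'b) monoid_scheme \<Rightarrow> 'a set \<Rightarrow> nat" where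
  "vc_cayley G A = vc_dim (carrier G) ((\<lambda>x. neg_translate G x A) ` carrier G)"

definition delta_VC :: "('a, 'b) monoid_scheme set \<Rightarrow> int list \<Rightarrow> real" where
  "delta_VC \<G> cs = Complete_Lattices.Inf {\<alpha>. \<alpha> \<ge> 0 \<and> (\<exists>C::nat. \<forall>G\<in>\<G>. \<forall>A. A \<subseteq> carrier G \<and> solution_free G cs A
        \<and> real (card A) \<ge> \<alpha> * real (card (carrier G)) \<longrightarrow> vc_cayley G A \<le> C)}"

end

theory Submission
  imports Defs "HOL-Real_Asymp.Real_Asymp"
begin

text \<open>
  Since \<open>delta_VC = 0\<close>, the Cayley graphs of solution-free sets of density at least \<open>\<alpha>\<close> have
  VC dimension at most some \<open>C(\<alpha>)\<close>. Now \<open>A + T = \<Gamma>\<close> says exactly that \<open>T\<close> meets every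
  translate \<open>x - A\<close>, and all these translates have density at least \<open>\<alpha>\<close>. So the theorem is an
  instance of the epsilon-net theorem: a family of VC dimension at most \<open>d\<close> whose members all
  have density at least \<open>\<alpha>\<close> in a finite set \<open>U\<close> has a hitting set of size \<open>N(\<alpha>, d)\<close>, independent
  of \<open>U\<close>.

  The epsilon-net theorem is proved by double sampling. Draw \<open>y, z \<in> U\<^sup>k\<^sup>\<times>\<^sup>k\<close>. If \<open>y\<close> misses a
  member \<open>S\<close>, then for at least half of all \<open>z\<close> every row of \<open>z\<close> meets \<open>S\<close>, because a single row
  misses \<open>S\<close> with probability at most \<open>(1 - \<alpha>)\<^sup>k\<close>. On the other hand, exchanging the entries of
  a fixed pair \<open>(y, z)\<close> at a random set of positions produces such a configuration with
  probability at most \<open>(2k\<^sup>2 + 1)\<^sup>d 2\<^sup>-\<^sup>k\<close>: by the Sauer--Shelah bound the family has at most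
  \<open>(2k\<^sup>2 + 1)\<^sup>d\<close> traces on the \<open>2k\<^sup>2\<close> sampled points, and for each trace the exchange is forced at
  one position in every row. Counting the pairs both ways shows that for large \<open>k\<close> some \<open>y\<close>
  meets every member.
\<close>

section \<open>Shattering and the Sauer--Shelah bound\<close>

lemma shatters_iff_Pow_subset: "shatters F Y \<longleftrightarrow> Pow Y \<subseteq> (\<lambda>B. Y \<inter> B) ` F"
  unfolding shatters_def by blast

lemma shatters_mono: "shatters F Y \<Longrightarrow> F \<subseteq> F' \<Longrightarrow> shatters F' Y"
  unfolding shatters_iff_Pow_subset by blast

lemma shatters_imp_separates:
  assumes "shatters F Y" "x \<in> Y"
  shows "\<exists>B\<in>F. x \<in> B" and "\<exists>B\<in>F. x \<notin> B"
proof -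
  have "{x} \<in> (\<lambda>B. Y \<inter> B) ` F" "{} \<in> (\<lambda>B. Y \<inter> B) ` F"
    using assms unfolding shatters_iff_Pow_subset by auto
  then show "\<exists>B\<in>F. x \<in> B" and "\<exists>B\<in>F. x \<notin> B"
    using assms(2) by auto
qed

lemma shatters_insert:
  assumes "shatters {B \<in> F. x \<notin> B} Y" and "shatters {B \<in> F. x \<in> B} Y"
  shows "shatters F (insert x Y)"
  unfolding shatters_iff_Pow_subset
proof
  fix V assume V: "V \<in> Pow (insert x Y)"
  show "V \<in> (\<lambda>B. insert x Y \<inter> B) ` F"
  proof (cases "x \<in> V")
    case True
    then obtain B where "B \<in> F" "x \<in> B" "V - {x} = Y \<inter> B"
      using assms(2) V unfolding shatters_iff_Pow_subset by blast
    then show ?thesis using True by blast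
  next
    case False
    then obtain B where "B \<in> F" "x \<notin> B" "V = Y \<inter> B"
      using assms(1) V unfolding shatters_iff_Pow_subset by blast
    then show ?thesis by blast
  qed
qed

lemma finite_shattered: "finite W \<Longrightarrow> finite {Y. Y \<subseteq> W \<and> shatters H Y}"
  by (rule finite_subset[of _ "Pow W"]) auto

lemma shatters_empty: "H \<noteq> {} \<Longrightarrow> shatters H {}"
  by (auto simp: shatters_def)

lemma card_shattered_split_le:
  assumes "finite W" "x \<in> W"
  shows "card {Y. Y \<subseteq> W \<and> shatters {B \<in> H. x \<notin> B} Y} + card {Y. Y \<subseteq> W \<and> shatters {B \<in> H. x \<in> B} Y}
    \<le> card {Y. Y \<subseteq> W \<and> shatters H Y}"
proof -
  define Sh0 where "Sh0 = {Y. Y \<subseteq> W \<and> shatters {B \<in> H. x \<notin> B} Y}"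
  define Sh1 where "Sh1 = {Y. Y \<subseteq> W \<and> shatters {B \<in> H. x \<in> B} Y}"
  define Sh where "Sh = {Y. Y \<subseteq> W \<and> shatters H Y}"
  have fin: "finite Sh0" "finite Sh1" "finite Sh"
    using finite_shattered[OF assms(1)] unfolding Sh0_def Sh1_def Sh_def by blast+
  have x_notin: "x \<notin> Y" if "Y \<in> Sh0 \<union> Sh1" for Y
    using that shatters_imp_separates(1)[of "{B \<in> H. x \<notin> B}" Y x]
      shatters_imp_separates(2)[of "{B \<in> H. x \<in> B}" Y x]
    unfolding Sh0_def Sh1_def by blast
  have "Sh0 \<union> Sh1 \<subseteq> Sh"
    using shatters_mono[of "{B \<in> H. x \<notin> B}" _ H] shatters_mono[of "{B \<in> H. x \<in> B}" _ H]
    unfolding Sh0_def Sh1_def Sh_def by blast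
  moreover have "insert x ` (Sh0 \<inter> Sh1) \<subseteq> Sh"
    using assms(2) shatters_insert[of H x] unfolding Sh0_def Sh1_def Sh_def by blast
  ultimately have sub: "Sh0 \<union> Sh1 \<union> insert x ` (Sh0 \<inter> Sh1) \<subseteq> Sh"
    by blast
  have "inj_on (insert x) (Sh0 \<inter> Sh1)"
    using x_notin by (intro inj_onI) (metis Int_iff UnI1 Diff_insert_absorb)
  moreover have "(Sh0 \<union> Sh1) \<inter> insert x ` (Sh0 \<inter> Sh1) = {}"
    using x_notin by auto
  ultimately have "card (Sh0 \<union> Sh1) + card (Sh0 \<inter> Sh1) = card (Sh0 \<union> Sh1 \<union> insert x ` (Sh0 \<inter> Sh1))"
    using fin by (simp add: card_Un_disjoint card_image)
  also have "\<dots> \<le> card Sh"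
    by (rule card_mono[OF fin(3) sub])
  finally show ?thesis
    using card_Un_Int[OF fin(1,2)] unfolding Sh0_def Sh1_def Sh_def by simp
qed

lemma card_le_card_shattered:
  assumes "finite W" "H \<subseteq> Pow W"
  shows "card H \<le> card {Y. Y \<subseteq> W \<and> shatters H Y}"
  using assms(2)
proof (induction "card H" arbitrary: H rule: less_induct)
  case less
  have fin_H: "finite H"
    using less.prems assms(1) by (meson finite_Pow_iff finite_subset)
  show ?case
  proof (cases "\<exists>h1\<in>H. \<exists>h2\<in>H. h1 \<noteq> h2")
    case False
    then have "card H \<le> 1"
      using card_le_Suc0_iff_eq[OF fin_H] by auto
    moreover have "1 \<le> card {Y. Y \<subseteq> W \<and> shatters H Y}" if "H \<noteq> {}"
    proof -
      have "{} \<in> {Y. Y \<subseteq> W \<and> shatters H Y}"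
        using shatters_empty[OF that] by simp
      then show ?thesis
        using finite_shattered[OF assms(1), of H] by (metis card_0_eq empty_iff less_one not_le)
    qed
    ultimately show ?thesis
      by (cases "H = {}") auto
  next
    case True
    then obtain h1 h2 x where h: "h1 \<in> H" "h2 \<in> H" "x \<in> W" "(x \<in> h1) \<noteq> (x \<in> h2)"
      using less.prems by blast
    have "{B \<in> H. x \<notin> B} \<subset> H" "{B \<in> H. x \<in> B} \<subset> H"
      using h by blast+
    then have "card {B \<in> H. x \<notin> B} \<le> card {Y. Y \<subseteq> W \<and> shatters {B \<in> H. x \<notin> B} Y}"
      and "card {B \<in> H. x \<in> B} \<le> card {Y. Y \<subseteq> W \<and> shatters {B \<in> H. x \<in> B} Y}"
      using less.prems by (blast intro: less.hyps psubset_card_mono[OF fin_H])+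
    have split: "{B \<in> H. x \<notin> B} \<union> {B \<in> H. x \<in> B} = H"
      by blast
    have "card H = card {B \<in> H. x \<notin> B} + card {B \<in> H. x \<in> B}"
      using card_Un_disjoint[of "{B \<in> H. x \<notin> B}" "{B \<in> H. x \<in> B}"] fin_H
      unfolding split by auto
    also have "\<dots> \<le> card {Y. Y \<subseteq> W \<and> shatters {B \<in> H. x \<notin> B} Y}
        + card {Y. Y \<subseteq> W \<and> shatters {B \<in> H. x \<in> B} Y}"
      by (rule add_mono) fact+
    also have "\<dots> \<le> card {Y. Y \<subseteq> W \<and> shatters H Y}"
      by (rule card_shattered_split_le[OF assms(1) h(3)])
    finally show ?thesis .
  qed
qed

lemma sum_power_le_Suc_power: "(\<Sum>i\<le>d. n ^ i) \<le> (Suc n) ^ d"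
proof (induction d)
  case (Suc d)
  have "(\<Sum>i\<le>Suc d. n ^ i) \<le> Suc n ^ d + n * n ^ d"
    using Suc.IH by simp
  also have "\<dots> \<le> Suc n ^ Suc d"
    by (simp add: power_mono)
  finally show ?case .
qed simp

lemma card_subsets_card_le:
  assumes "finite W"
  shows "card {Y. Y \<subseteq> W \<and> card Y \<le> d} \<le> Suc (card W) ^ d"
proof -
  have "{Y. Y \<subseteq> W \<and> card Y \<le> d} = (\<Union>i\<le>d. {Y. Y \<subseteq> W \<and> card Y = i})"
    by auto
  then have "card {Y. Y \<subseteq> W \<and> card Y \<le> d} \<le> (\<Sum>i\<le>d. card W choose i)"
    using card_UN_le[of "{..d}" "\<lambda>i. {Y. Y \<subseteq> W \<and> card Y = i}"] by (simp add: n_subsets[OF assms])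
  also have "\<dots> \<le> (\<Sum>i\<le>d. card W ^ i)"
  proof (intro sum_mono)
    fix i
    show "card W choose i \<le> card W ^ i"
      by (cases "i \<le> card W") (simp_all add: binomial_le_pow binomial_eq_0)
  qed
  also have "\<dots> \<le> Suc (card W) ^ d"
    by (rule sum_power_le_Suc_power)
  finally show ?thesis .
qed

lemma card_traces_le:
  assumes "finite W" and "\<forall>Y\<subseteq>W. shatters F Y \<longrightarrow> card Y \<le> d"
  shows "card ((\<inter>) W ` F) \<le> Suc (card W) ^ d"
proof -
  have "shatters ((\<inter>) W ` F) Y \<longleftrightarrow> shatters F Y" if "Y \<subseteq> W" for Y
  proof -
    have "Y \<inter> (W \<inter> S) = Y \<inter> S" for S
      using that by blast
    then have "(\<inter>) Y ` (\<inter>) W ` F = (\<inter>) Y ` F"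
      by (simp add: image_image)
    then show ?thesis unfolding shatters_def by simp
  qed
  then have sub: "{Y. Y \<subseteq> W \<and> shatters ((\<inter>) W ` F) Y} \<subseteq> {Y. Y \<subseteq> W \<and> card Y \<le> d}"
    using assms(2) by blast
  have "card ((\<inter>) W ` F) \<le> card {Y. Y \<subseteq> W \<and> shatters ((\<inter>) W ` F) Y}"
    by (rule card_le_card_shattered[OF assms(1)]) blast
  also have "\<dots> \<le> card {Y. Y \<subseteq> W \<and> card Y \<le> d}"
    using assms(1) by (intro card_mono[OF _ sub]) (rule finite_subset[of _ "Pow W"], auto)
  also have "\<dots> \<le> Suc (card W) ^ d"
    by (rule card_subsets_card_le[OF assms(1)])
  finally show ?thesis .
qed

section \<open>Double sampling on a grid\<close>

definition grid :: "nat \<Rightarrow> (nat \<times> nat) set" where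
  "grid k = {..<k} \<times> {..<k}"

lemma finite_grid [simp]: "finite (grid k)"
  by (simp add: grid_def)

lemma card_grid [simp]: "card (grid k) = k * k"
  by (simp add: grid_def card_cartesian_product)

lemma mem_grid [simp]: "(j, l) \<in> grid k \<longleftrightarrow> j < k \<and> l < k"
  by (simp add: grid_def)

lemma card_PiE_grid [simp]: "finite U \<Longrightarrow> card (grid k \<rightarrow>\<^sub>E U) = card U ^ (k * k)"
  by (simp add: card_PiE)

definition meets_every_row :: "nat \<Rightarrow> 'a set \<Rightarrow> (nat \<times> nat \<Rightarrow> 'a) \<Rightarrow> bool" where
  "meets_every_row k S z \<longleftrightarrow> (\<forall>j<k. \<exists>l<k. z (j, l) \<in> S)"

lemma card_PiE_grid_row:
  assumes "j < k"
  shows "card (PiE (grid k) (\<lambda>i. if fst i = j then V else U)) = card V ^ k * card U ^ (k * k - k)"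
proof -
  have row: "grid k \<inter> {i. fst i = j} = {j} \<times> {..<k}"
    using assms by (auto simp: grid_def)
  then have rest: "grid k \<inter> - {i. fst i = j} = grid k - {j} \<times> {..<k}"
    by blast
  have "card (grid k - {j} \<times> {..<k}) = k * k - k"
    using row by (subst card_Diff_subset) (auto simp: card_cartesian_product)
  then show ?thesis
    by (simp add: card_PiE if_distrib[of card] prod.If_cases row rest card_cartesian_product)
qed

lemma card_row_missing_le:
  fixes \<alpha> :: real
  assumes "finite U" "S \<subseteq> U" "\<alpha> * card U \<le> card S"
  shows "card {z \<in> grid k \<rightarrow>\<^sub>E U. \<not> meets_every_row k S z} \<le> k * (1 - \<alpha>) ^ k * card (grid k \<rightarrow>\<^sub>E U)"
proof -
  define row where "row j = PiE (grid k) (\<lambda>i. if fst i = j then U - S else U)" for j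
  have "{z \<in> grid k \<rightarrow>\<^sub>E U. \<not> meets_every_row k S z} \<subseteq> (\<Union>j<k. row j)"
  proof
    fix z assume "z \<in> {z \<in> grid k \<rightarrow>\<^sub>E U. \<not> meets_every_row k S z}"
    then obtain j where "j < k" "\<forall>l<k. z (j, l) \<notin> S" "z \<in> grid k \<rightarrow>\<^sub>E U"
      by (auto simp: meets_every_row_def)
    then have "z \<in> row j"
      by (fastforce simp: row_def PiE_iff grid_def)
    then show "z \<in> (\<Union>j<k. row j)"
      using \<open>j < k\<close> by blast
  qed
  moreover have "finite (\<Union>j<k. row j)"
    using assms(1) by (auto simp: row_def finite_PiE)
  ultimately have "card {z \<in> grid k \<rightarrow>\<^sub>E U. \<not> meets_every_row k S z} \<le> (\<Sum>j<k. card (row j))"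
    using card_UN_le[of "{..<k}" row] by (meson card_mono finite_lessThan order_trans)
  also have "\<dots> = k * (card (U - S) ^ k * card U ^ (k * k - k))"
    by (simp add: row_def card_PiE_grid_row)
  finally have "real (card {z \<in> grid k \<rightarrow>\<^sub>E U. \<not> meets_every_row k S z})
      \<le> k * (real (card (U - S)) ^ k * real (card U) ^ (k * k - k))"
    by (simp flip: of_nat_power of_nat_mult)
  also have "\<dots> \<le> k * (((1 - \<alpha>) * card U) ^ k * real (card U) ^ (k * k - k))"
    using assms by (intro mult_left_mono mult_right_mono power_mono)
      (auto simp: card_Diff_subset finite_subset of_nat_diff card_mono algebra_simps)
  also have "\<dots> = k * (1 - \<alpha>) ^ k * card (grid k \<rightarrow>\<^sub>E U)"
    using assms(1) by (simp add: power_mult_distrib power_add[symmetric] le_square)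
  finally show ?thesis .
qed

definition double_sample_event ::
    "'a set set \<Rightarrow> nat \<Rightarrow> (nat \<times> nat \<Rightarrow> 'a) \<times> (nat \<times> nat \<Rightarrow> 'a) \<Rightarrow> bool" where
  "double_sample_event F k w \<longleftrightarrow> (\<exists>S\<in>F. S \<inter> fst w ` grid k = {} \<and> meets_every_row k S (snd w))"

lemma double_sample_event_singleton:
  "double_sample_event {R} k w \<longleftrightarrow> (\<forall>i\<in>grid k. fst w i \<notin> R) \<and> meets_every_row k R (snd w)"
  by (auto simp: double_sample_event_def)

lemma card_double_sample_event_fibre_ge:
  fixes \<alpha> :: real
  assumes "finite U" "\<forall>S\<in>F. S \<subseteq> U \<and> \<alpha> * card U \<le> card S" "k * (1 - \<alpha>) ^ k \<le> 1 / 2"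
    and "S \<in> F" "S \<inter> y ` grid k = {}"
  defines "M \<equiv> grid k \<rightarrow>\<^sub>E U"
  shows "card M / 2 \<le> card {z \<in> M. double_sample_event F k (y, z)}"
proof -
  have "M = {z \<in> M. meets_every_row k S z} \<union> {z \<in> M. \<not> meets_every_row k S z}"
    by blast
  then have "card M = card ({z \<in> M. meets_every_row k S z} \<union> {z \<in> M. \<not> meets_every_row k S z})"
    by (rule arg_cong)
  also have "\<dots> \<le> card {z \<in> M. meets_every_row k S z} + card {z \<in> M. \<not> meets_every_row k S z}"
    by (rule card_Un_le)
  finally have "card M \<le> card {z \<in> M. meets_every_row k S z} + card {z \<in> M. \<not> meets_every_row k S z}" .
  moreover have "card {z \<in> M. \<not> meets_every_row k S z} \<le> k * (1 - \<alpha>) ^ k * card M"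
    unfolding M_def using assms(1,2,4) by (intro card_row_missing_le) auto
  moreover have "k * (1 - \<alpha>) ^ k * card M \<le> 1 / 2 * card M"
    using assms(3) by (intro mult_right_mono) auto
  moreover have "card {z \<in> M. meets_every_row k S z} \<le> card {z \<in> M. double_sample_event F k (y, z)}"
    using assms(1,4,5) by (intro card_mono) (auto simp: M_def finite_PiE double_sample_event_def)
  ultimately show ?thesis
    by linarith
qed

lemma card_double_sample_event_ge:
  fixes \<alpha> :: real
  assumes "finite U" "\<forall>S\<in>F. S \<subseteq> U \<and> \<alpha> * card U \<le> card S" "k * (1 - \<alpha>) ^ k \<le> 1 / 2"
  defines "M \<equiv> grid k \<rightarrow>\<^sub>E U"
  shows "card {y \<in> M. \<exists>S\<in>F. S \<inter> y ` grid k = {}} * card M / 2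
    \<le> card {w \<in> M \<times> M. double_sample_event F k w}"
proof -
  define E0 where "E0 = {y \<in> M. \<exists>S\<in>F. S \<inter> y ` grid k = {}}"
  have fin_M: "finite M"
    using assms(1) by (simp add: M_def finite_PiE)
  have fibre: "card M / 2 \<le> card {z \<in> M. double_sample_event F k (y, z)}" if "y \<in> E0" for y
    using that card_double_sample_event_fibre_ge[OF assms(1-3)] unfolding E0_def M_def by blast
  have "{w \<in> M \<times> M. double_sample_event F k w} = Sigma M (\<lambda>y. {z \<in> M. double_sample_event F k (y, z)})"
    by auto
  then have "real (card {w \<in> M \<times> M. double_sample_event F k w})
      = (\<Sum>y\<in>M. real (card {z \<in> M. double_sample_event F k (y, z)}))"
    using fin_M by simp
  also have "\<dots> \<ge> (\<Sum>y\<in>E0. real (card {z \<in> M. double_sample_event F k (y, z)}))"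
    using fin_M by (intro sum_mono2) (auto simp: E0_def)
  also have "(\<Sum>y\<in>E0. real (card {z \<in> M. double_sample_event F k (y, z)})) \<ge> card E0 * card M / 2"
    using sum_mono[OF fibre] by simp
  finally show ?thesis
    by (simp add: E0_def)
qed

definition swap_at :: "'i set \<Rightarrow> ('i \<Rightarrow> 'a) \<times> ('i \<Rightarrow> 'a) \<Rightarrow> ('i \<Rightarrow> 'a) \<times> ('i \<Rightarrow> 'a)" where
  "swap_at s w = ((\<lambda>i. if i \<in> s then snd w i else fst w i), (\<lambda>i. if i \<in> s then fst w i else snd w i))"

lemma swap_at_swap_at [simp]: "swap_at s (swap_at s w) = w"
  by (simp add: swap_at_def fun_eq_iff prod_eq_iff)

lemma swap_at_in_PiE_Times:
  "w \<in> (I \<rightarrow>\<^sub>E U) \<times> (I \<rightarrow>\<^sub>E U) \<Longrightarrow> swap_at s w \<in> (I \<rightarrow>\<^sub>E U) \<times> (I \<rightarrow>\<^sub>E U)"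
  by (auto simp: swap_at_def PiE_iff extensional_def)

lemma card_swap_at_preimage:
  "card {w \<in> (I \<rightarrow>\<^sub>E U) \<times> (I \<rightarrow>\<^sub>E U). P (swap_at s w)} = card {w \<in> (I \<rightarrow>\<^sub>E U) \<times> (I \<rightarrow>\<^sub>E U). P w}"
  by (intro bij_betw_same_card[of "swap_at s"] bij_betw_byWitness[where f' = "swap_at s"])
    (simp_all add: image_subset_iff swap_at_in_PiE_Times)

lemma card_mult_card_Pow_eq_sum_swaps:
  assumes "finite I" "finite U"
  shows "card {w \<in> (I \<rightarrow>\<^sub>E U) \<times> (I \<rightarrow>\<^sub>E U). P w} * 2 ^ card I
    = (\<Sum>w\<in>(I \<rightarrow>\<^sub>E U) \<times> (I \<rightarrow>\<^sub>E U). card {s \<in> Pow I. P (swap_at s w)})"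
proof -
  have "(\<Sum>w\<in>(I \<rightarrow>\<^sub>E U) \<times> (I \<rightarrow>\<^sub>E U). card {s \<in> Pow I. P (swap_at s w)})
      = (\<Sum>s\<in>Pow I. card {w \<in> (I \<rightarrow>\<^sub>E U) \<times> (I \<rightarrow>\<^sub>E U). P (swap_at s w)})"
    using sum.swap_restrict[of "(I \<rightarrow>\<^sub>E U) \<times> (I \<rightarrow>\<^sub>E U)" "Pow I" "\<lambda>_ _. 1::nat" "\<lambda>w s. P (swap_at s w)"]
      assms by (simp add: finite_PiE)
  also have "\<dots> = card {w \<in> (I \<rightarrow>\<^sub>E U) \<times> (I \<rightarrow>\<^sub>E U). P w} * 2 ^ card I"
    using assms(1) by (simp add: card_swap_at_preimage card_Pow)
  finally show ?thesis ..
qed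

lemma card_Pow_restrict_le:
  assumes "finite I" "J \<subseteq> I"
  shows "card {s \<in> Pow I. s \<inter> J = D} \<le> 2 ^ (card I - card J)"
proof -
  have "{s \<in> Pow I. s \<inter> J = D} \<subseteq> (\<lambda>t. t \<union> D) ` Pow (I - J)"
  proof
    fix s assume "s \<in> {s \<in> Pow I. s \<inter> J = D}"
    then have "s = (s - J) \<union> D" "s - J \<in> Pow (I - J)"
      by auto
    then show "s \<in> (\<lambda>t. t \<union> D) ` Pow (I - J)"
      by blast
  qed
  then have "card {s \<in> Pow I. s \<inter> J = D} \<le> card (Pow (I - J))"
    using assms(1) by (meson card_image_le card_mono finite_Diff finite_Pow_iff finite_imageI order_trans)
  also have "\<dots> = 2 ^ (card I - card J)"
    using assms by (simp add: card_Pow card_Diff_subset finite_subset)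
  finally show ?thesis .
qed

lemma swap_at_mixed:
  "fst (swap_at s w) i \<notin> R \<Longrightarrow> snd (swap_at s w) i \<in> R \<Longrightarrow> (fst w i \<in> R) \<noteq> (snd w i \<in> R)"
  by (simp add: swap_at_def split: if_splits)

lemma swap_at_determined:
  "fst (swap_at s w) i \<notin> R \<Longrightarrow> (fst w i \<in> R) \<noteq> (snd w i \<in> R) \<Longrightarrow> i \<in> s \<longleftrightarrow> fst w i \<in> R"
  by (simp add: swap_at_def split: if_splits)

definition mixed_positions :: "'a set \<Rightarrow> nat \<Rightarrow> (nat \<times> nat \<Rightarrow> 'a) \<times> (nat \<times> nat \<Rightarrow> 'a) \<Rightarrow> (nat \<times> nat) set" where
  "mixed_positions R k w = {i \<in> grid k. (fst w i \<in> R) \<noteq> (snd w i \<in> R)}"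

lemma card_mixed_positions_ge:
  assumes "double_sample_event {R} k (swap_at s w)"
  shows "k \<le> card (mixed_positions R k w)"
proof -
  have miss: "\<forall>i\<in>grid k. fst (swap_at s w) i \<notin> R" and meet: "meets_every_row k R (snd (swap_at s w))"
    using assms by (simp_all add: double_sample_event_singleton)
  have "{..<k} \<subseteq> fst ` mixed_positions R k w"
  proof
    fix j assume "j \<in> {..<k}"
    then obtain l where l: "l < k" "snd (swap_at s w) (j, l) \<in> R"
      using meet by (auto simp: meets_every_row_def)
    have "fst (swap_at s w) (j, l) \<notin> R"
      using miss \<open>j \<in> {..<k}\<close> l(1) by simp
    then have "(fst w (j, l) \<in> R) \<noteq> (snd w (j, l) \<in> R)"
      using l(2) by (rule swap_at_mixed)
    then have "(j, l) \<in> mixed_positions R k w"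
      using \<open>j \<in> {..<k}\<close> l(1) by (simp add: mixed_positions_def)
    then show "j \<in> fst ` mixed_positions R k w"
      by (rule rev_image_eqI) simp
  qed
  moreover have fin: "finite (mixed_positions R k w)"
    by (rule finite_subset[of _ "grid k"]) (auto simp: mixed_positions_def)
  ultimately show ?thesis
    using card_mono[OF finite_imageI[OF fin]] card_image_le[OF fin, of fst] by fastforce
qed

lemma swap_at_restrict_mixed_positions:
  assumes "double_sample_event {R} k (swap_at s w)"
  shows "s \<inter> mixed_positions R k w = {i \<in> mixed_positions R k w. fst w i \<in> R}"
proof -
  have miss: "\<forall>i\<in>grid k. fst (swap_at s w) i \<notin> R"
    using assms by (simp add: double_sample_event_singleton)
  have "i \<in> s \<longleftrightarrow> fst w i \<in> R" if "i \<in> mixed_positions R k w" for i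
  proof (rule swap_at_determined)
    show "fst (swap_at s w) i \<notin> R"
      using miss that by (simp add: mixed_positions_def)
    show "(fst w i \<in> R) \<noteq> (snd w i \<in> R)"
      using that by (simp add: mixed_positions_def)
  qed
  then show ?thesis
    by blast
qed

lemma card_swaps_into_single_event_le:
  "card {s \<in> Pow (grid k). double_sample_event {R} k (swap_at s w)} \<le> 2 ^ (k * k - k)"
proof (cases "\<exists>s \<in> Pow (grid k). double_sample_event {R} k (swap_at s w)")
  case False
  then have "{s \<in> Pow (grid k). double_sample_event {R} k (swap_at s w)} = {}"
    by blast
  then show ?thesis
    by (simp only: card.empty zero_le)
next
  case True
  then obtain s0 where "double_sample_event {R} k (swap_at s0 w)"
    by blast
  then have "k \<le> card (mixed_positions R k w)"
    by (rule card_mixed_positions_ge)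
  have "{s \<in> Pow (grid k). double_sample_event {R} k (swap_at s w)}
      \<subseteq> {s \<in> Pow (grid k). s \<inter> mixed_positions R k w = {i \<in> mixed_positions R k w. fst w i \<in> R}}"
  proof (rule subsetI)
    fix s assume s: "s \<in> {s \<in> Pow (grid k). double_sample_event {R} k (swap_at s w)}"
    then have "s \<inter> mixed_positions R k w = {i \<in> mixed_positions R k w. fst w i \<in> R}"
      by (intro swap_at_restrict_mixed_positions) simp
    with s show "s \<in> {s \<in> Pow (grid k). s \<inter> mixed_positions R k w = {i \<in> mixed_positions R k w. fst w i \<in> R}}"
      by simp
  qed
  then have "card {s \<in> Pow (grid k). double_sample_event {R} k (swap_at s w)}
      \<le> card {s \<in> Pow (grid k). s \<inter> mixed_positions R k w = {i \<in> mixed_positions R k w. fst w i \<in> R}}"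
    by (rule card_mono[rotated]) simp
  also have "\<dots> \<le> 2 ^ (card (grid k) - card (mixed_positions R k w))"
    by (rule card_Pow_restrict_le) (auto simp: mixed_positions_def)
  also have "\<dots> \<le> 2 ^ (k * k - k)"
    using \<open>k \<le> card (mixed_positions R k w)\<close> by (intro power_increasing) auto
  finally show ?thesis .
qed

lemma double_sample_event_trace:
  assumes "\<forall>i\<in>grid k. fst w i \<in> W \<and> snd w i \<in> W" and "double_sample_event F k w"
  shows "\<exists>R\<in>(\<inter>) W ` F. double_sample_event {R} k w"
proof -
  obtain S where S: "S \<in> F" "S \<inter> fst w ` grid k = {}" "meets_every_row k S (snd w)"
    using assms(2) by (auto simp: double_sample_event_def)
  have "\<forall>i\<in>grid k. fst w i \<notin> W \<inter> S"
    using S(2) by blast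
  moreover have "meets_every_row k (W \<inter> S) (snd w)"
    unfolding meets_every_row_def
  proof (intro allI impI)
    fix j assume "j < k"
    then obtain l where "l < k" "snd w (j, l) \<in> S"
      using S(3) by (auto simp: meets_every_row_def)
    moreover have "snd w (j, l) \<in> W"
      using assms(1) \<open>j < k\<close> \<open>l < k\<close> by simp
    ultimately show "\<exists>l<k. snd w (j, l) \<in> W \<inter> S"
      by blast
  qed
  ultimately have "double_sample_event {W \<inter> S} k w"
    by (simp add: double_sample_event_singleton)
  then show ?thesis
    using S(1) by (intro bexI[of _ "W \<inter> S"]) auto
qed

lemma swaps_into_event_subset_traces:
  fixes w :: "(nat \<times> nat \<Rightarrow> 'a) \<times> (nat \<times> nat \<Rightarrow> 'a)" and k :: nat
  defines "W \<equiv> fst w ` grid k \<union> snd w ` grid k"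
  shows "{s \<in> Pow (grid k). double_sample_event F k (swap_at s w)}
    \<subseteq> (\<Union>R\<in>(\<inter>) W ` F. {s \<in> Pow (grid k). double_sample_event {R} k (swap_at s w)})"
proof (rule subsetI)
  fix s assume "s \<in> {s \<in> Pow (grid k). double_sample_event F k (swap_at s w)}"
  then have s: "s \<in> Pow (grid k)" "double_sample_event F k (swap_at s w)"
    by simp_all
  have "fst (swap_at s w) i \<in> W \<and> snd (swap_at s w) i \<in> W" if "i \<in> grid k" for i
    using that by (auto simp: swap_at_def W_def)
  then have "\<forall>i\<in>grid k. fst (swap_at s w) i \<in> W \<and> snd (swap_at s w) i \<in> W"
    by blast
  from double_sample_event_trace[OF this s(2)]
  obtain R where R: "R \<in> (\<inter>) W ` F" "double_sample_event {R} k (swap_at s w)"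
    by (rule bexE)
  show "s \<in> (\<Union>R\<in>(\<inter>) W ` F. {s \<in> Pow (grid k). double_sample_event {R} k (swap_at s w)})"
  proof (rule UN_I)
    show "R \<in> (\<inter>) W ` F"
      by (rule R(1))
    show "s \<in> {s \<in> Pow (grid k). double_sample_event {R} k (swap_at s w)}"
      using s(1) R(2) by simp
  qed
qed

lemma card_swaps_into_event_le:
  assumes "w \<in> (grid k \<rightarrow>\<^sub>E U) \<times> (grid k \<rightarrow>\<^sub>E U)" and "\<forall>Y\<subseteq>U. shatters F Y \<longrightarrow> card Y \<le> d"
  shows "card {s \<in> Pow (grid k). double_sample_event F k (swap_at s w)} \<le> Suc (2 * k * k) ^ d * 2 ^ (k * k - k)"
proof -
  define W where "W = fst w ` grid k \<union> snd w ` grid k"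
  have "W \<subseteq> U"
    using assms(1) by (auto simp: W_def PiE_iff)
  have fin_W: "finite W"
    by (simp add: W_def)
  have "card W \<le> card (fst w ` grid k) + card (snd w ` grid k)"
    unfolding W_def by (rule card_Un_le)
  also have "\<dots> \<le> 2 * k * k"
    using card_image_le[OF finite_grid, of "fst w" k] card_image_le[OF finite_grid, of "snd w" k] by simp
  finally have card_W: "card W \<le> 2 * k * k" .
  have fin_traces: "finite ((\<inter>) W ` F)"
    by (rule finite_subset[of _ "Pow W"]) (use fin_W in auto)
  have "{s \<in> Pow (grid k). double_sample_event F k (swap_at s w)}
      \<subseteq> (\<Union>R\<in>(\<inter>) W ` F. {s \<in> Pow (grid k). double_sample_event {R} k (swap_at s w)})"
    unfolding W_def by (rule swaps_into_event_subset_traces)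
  then have "card {s \<in> Pow (grid k). double_sample_event F k (swap_at s w)}
      \<le> card (\<Union>R\<in>(\<inter>) W ` F. {s \<in> Pow (grid k). double_sample_event {R} k (swap_at s w)})"
    by (rule card_mono[rotated]) (rule finite_subset[of _ "Pow (grid k)"], auto)
  also have "\<dots> \<le> (\<Sum>R\<in>(\<inter>) W ` F. card {s \<in> Pow (grid k). double_sample_event {R} k (swap_at s w)})"
    by (rule card_UN_le[OF fin_traces])
  also have "\<dots> \<le> (\<Sum>R\<in>(\<inter>) W ` F. 2 ^ (k * k - k))"
    by (rule sum_mono) (rule card_swaps_into_single_event_le)
  also have "\<dots> = card ((\<inter>) W ` F) * 2 ^ (k * k - k)"
    by simp
  also have "\<dots> \<le> Suc (card W) ^ d * 2 ^ (k * k - k)"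
    using card_traces_le[OF fin_W, of F d] assms(2) \<open>W \<subseteq> U\<close> by (intro mult_right_mono) auto
  also have "\<dots> \<le> Suc (2 * k * k) ^ d * 2 ^ (k * k - k)"
    using card_W by (intro mult_right_mono power_mono) auto
  finally show ?thesis .
qed

lemma card_double_sample_event_le:
  fixes k :: nat
  assumes "finite U" and "\<forall>Y\<subseteq>U. shatters F Y \<longrightarrow> card Y \<le> d"
  defines "M \<equiv> grid k \<rightarrow>\<^sub>E U"
  shows "card {w \<in> M \<times> M. double_sample_event F k w} * 2 ^ (k * k)
    \<le> card M ^ 2 * (Suc (2 * k * k) ^ d * 2 ^ (k * k - k))"
proof -
  have "card {w \<in> M \<times> M. double_sample_event F k w} * 2 ^ (k * k)
      = (\<Sum>w\<in>M \<times> M. card {s \<in> Pow (grid k). double_sample_event F k (swap_at s w)})"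
    using card_mult_card_Pow_eq_sum_swaps[OF finite_grid[of k] assms(1), where P = "double_sample_event F k"]
    by (simp add: M_def)
  also have "\<dots> \<le> (\<Sum>w\<in>M \<times> M. Suc (2 * k * k) ^ d * 2 ^ (k * k - k))"
    using assms(2) by (intro sum_mono card_swaps_into_event_le) (simp_all add: M_def)
  also have "\<dots> = card M ^ 2 * (Suc (2 * k * k) ^ d * 2 ^ (k * k - k))"
    by (simp add: card_cartesian_product power2_eq_square)
  finally show ?thesis .
qed

lemma exists_grid_sample_hitting_all:
  fixes \<alpha> :: real
  assumes "finite U" "U \<noteq> {}" "\<forall>S\<in>F. S \<subseteq> U \<and> \<alpha> * card U \<le> card S"
    and "\<forall>Y\<subseteq>U. shatters F Y \<longrightarrow> card Y \<le> d"
    and "k * (1 - \<alpha>) ^ k \<le> 1 / 2" and "2 * Suc (2 * k * k) ^ d < 2 ^ k"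
  shows "\<exists>y \<in> grid k \<rightarrow>\<^sub>E U. \<forall>S\<in>F. S \<inter> y ` grid k \<noteq> {}"
proof (rule ccontr)
  define M where "M = grid k \<rightarrow>\<^sub>E U"
  define m where "m = real (card M)"
  define E where "E = real (card {w \<in> M \<times> M. double_sample_event F k w})"
  define Q where "Q = real (Suc (2 * k * k) ^ d)"
  assume "\<not> ?thesis"
  then have "{y \<in> M. \<exists>S\<in>F. S \<inter> y ` grid k = {}} = M"
    by (auto simp: M_def)
  then have "m * m / 2 \<le> E"
    using card_double_sample_event_ge[OF assms(1,3,5)] unfolding m_def E_def M_def by simp
  then have "m * m / 2 * 2 ^ (k * k) \<le> E * 2 ^ (k * k)"
    by (rule mult_right_mono) simp
  also have "\<dots> \<le> m ^ 2 * (Q * 2 ^ (k * k - k))"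
    using of_nat_mono[OF card_double_sample_event_le[OF assms(1,4), of k]]
    unfolding m_def E_def Q_def M_def by simp
  finally have calc: "m * m / 2 * 2 ^ (k * k) \<le> m ^ 2 * (Q * 2 ^ (k * k - k))" .
  have "(2::real) ^ (k * k) = 2 ^ (k * k - k) * 2 ^ k"
    by (simp flip: power_add add: le_square)
  then have "(m * m * 2 ^ (k * k - k)) * 2 ^ k = 2 * (m * m / 2 * 2 ^ (k * k))"
    by simp
  also have "\<dots> \<le> (m * m * 2 ^ (k * k - k)) * (2 * Q)"
    using calc by (simp add: power2_eq_square algebra_simps)
  finally have "(m * m * 2 ^ (k * k - k)) * 2 ^ k \<le> (m * m * 2 ^ (k * k - k)) * (2 * Q)" .
  moreover have "0 < m"
    using assms(1,2) by (simp add: m_def M_def card_gt_0_iff)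
  ultimately have "2 ^ k \<le> 2 * Q"
    by (simp add: mult_le_cancel_left_pos)
  moreover have "2 * Q < 2 ^ k"
    using of_nat_less_iff[of "2 * Suc (2 * k * k) ^ d" "2 ^ k", where 'a = real] assms(6)
    unfolding Q_def by simp
  ultimately show False
    by simp
qed

lemma exists_sample_size:
  fixes \<beta> :: real
  assumes "0 < \<beta>" "\<beta> < 1"
  shows "\<exists>k::nat. k * (1 - \<beta>) ^ k \<le> 1 / 2 \<and> 2 * Suc (2 * k * k) ^ d < 2 ^ k"
proof -
  have "((\<lambda>k. real k * (1 - \<beta>) ^ k) \<longlongrightarrow> 0) at_top"
    using assms by real_asymp
  then have "eventually (\<lambda>k. real k * (1 - \<beta>) ^ k < 1 / 2) at_top"
    by (rule order_tendstoD) simp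
  moreover have "((\<lambda>k. 2 * (2 * real k * real k + 1) ^ d / 2 ^ k) \<longlongrightarrow> (0::real)) at_top"
    by real_asymp
  then have "eventually (\<lambda>k. 2 * (2 * real k * real k + 1) ^ d / 2 ^ k < (1::real)) at_top"
    by (rule order_tendstoD) simp
  ultimately have "eventually (\<lambda>k. real k * (1 - \<beta>) ^ k < 1 / 2
      \<and> 2 * (2 * real k * real k + 1) ^ d / 2 ^ k < (1::real)) sequentially"
    by (rule eventually_conj)
  then obtain k where k1: "real k * (1 - \<beta>) ^ k < 1 / 2"
    and k2: "2 * (2 * real k * real k + 1) ^ d / 2 ^ k < (1::real)"
    using eventually_happens'[OF sequentially_bot] by blast
  have "real (2 * Suc (2 * k * k) ^ d) < real (2 ^ k)"
    using k2 by (simp add: divide_less_eq algebra_simps)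
  then have "2 * Suc (2 * k * k) ^ d < 2 ^ k"
    by (simp only: of_nat_less_iff)
  with k1 show ?thesis
    by (intro exI[of _ k]) simp
qed

lemma epsilon_net:
  fixes \<alpha> :: real
  assumes "0 < \<alpha>"
  shows "\<exists>N::nat. \<forall>U F. finite U \<longrightarrow> U \<noteq> {} \<longrightarrow> (\<forall>S\<in>F. S \<subseteq> U \<and> \<alpha> * card U \<le> card S) \<longrightarrow>
    (\<forall>Y\<subseteq>U. shatters F Y \<longrightarrow> card Y \<le> d) \<longrightarrow> (\<exists>T\<subseteq>U. card T \<le> N \<and> (\<forall>S\<in>F. S \<inter> T \<noteq> {}))"
proof -
  define \<beta> where "\<beta> = min \<alpha> (1 / 2)"
  have \<beta>: "0 < \<beta>" "\<beta> < 1" "\<beta> \<le> \<alpha>"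
    using assms by (auto simp: \<beta>_def)
  obtain k :: nat where k1: "k * (1 - \<beta>) ^ k \<le> 1 / 2" and k2: "2 * Suc (2 * k * k) ^ d < 2 ^ k"
    using exists_sample_size[OF \<beta>(1,2)] by blast
  show ?thesis
  proof (intro exI[of _ "k * k"] allI impI)
    fix U F
    assume U: "finite U" "U \<noteq> {}" and dense: "\<forall>S\<in>F. S \<subseteq> U \<and> \<alpha> * card U \<le> card S"
      and vc: "\<forall>Y\<subseteq>U. shatters F Y \<longrightarrow> card Y \<le> d"
    have "\<forall>S\<in>F. S \<subseteq> U \<and> \<beta> * card U \<le> card S"
      using dense \<beta>(3) by (meson mult_right_mono of_nat_0_le_iff order_trans)
    then obtain y where y: "y \<in> grid k \<rightarrow>\<^sub>E U" "\<forall>S\<in>F. S \<inter> y ` grid k \<noteq> {}"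
      using exists_grid_sample_hitting_all[OF U _ vc k1 k2] by blast
    show "\<exists>T\<subseteq>U. card T \<le> k * k \<and> (\<forall>S\<in>F. S \<inter> T \<noteq> {})"
    proof (intro exI[of _ "y ` grid k"] conjI)
      show "y ` grid k \<subseteq> U"
        using y(1) by (auto simp: PiE_iff)
      show "card (y ` grid k) \<le> k * k"
        using card_image_le[OF finite_grid, of y k] by simp
      show "\<forall>S\<in>F. S \<inter> y ` grid k \<noteq> {}"
        by (rule y(2))
    qed
  qed
qed

section \<open>Translates in an abelian group\<close>

lemma card_le_vc_dim:
  assumes "finite Z" "Y \<subseteq> Z" "shatters F Y"
  shows "card Y \<le> vc_dim Z F"
  unfolding vc_dim_def
proof (rule cSup_upper)
  have "finite Y"
    using assms(2,1) by (rule finite_subset)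
  then show "card Y \<in> card ` {Y. Y \<subseteq> Z \<and> finite Y \<and> shatters F Y}"
    using assms(2,3) by blast
  show "bdd_above (card ` {Y. Y \<subseteq> Z \<and> finite Y \<and> shatters F Y})"
    using assms(1) by (auto intro!: bdd_aboveI[of _ "card Z"] card_mono)
qed

context group
begin

lemma neg_translate_subset: "x \<in> carrier G \<Longrightarrow> A \<subseteq> carrier G \<Longrightarrow> neg_translate G x A \<subseteq> carrier G"
  by (auto simp: neg_translate_def)

lemma card_neg_translate:
  assumes "x \<in> carrier G" "A \<subseteq> carrier G"
  shows "card (neg_translate G x A) = card A"
proof -
  have "inj_on (\<lambda>a. x \<otimes> inv a) A"
  proof (rule inj_onI)
    fix a b assume "a \<in> A" "b \<in> A" "x \<otimes> inv a = x \<otimes> inv b"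
    then have "inv a = inv b"
      using assms by (simp add: subsetD)
    then show "a = b"
      using \<open>a \<in> A\<close> \<open>b \<in> A\<close> assms(2) by (metis inv_inv subsetD)
  qed
  then show ?thesis
    by (simp add: neg_translate_def card_image)
qed

end

lemma (in group) card_lt_double_card_carrier:
  assumes "finite (carrier G)" "A \<subseteq> carrier G"
  shows "real (card A) < 2 * real (card (carrier G))"
proof -
  have "carrier G \<noteq> {}"
    using one_closed by blast
  then have "0 < card (carrier G)"
    using assms(1) by (simp add: card_gt_0_iff)
  moreover have "card A \<le> card (carrier G)"
    by (rule card_mono[OF assms])
  ultimately show ?thesis
    by linarith
qed

lemma (in comm_group) set_mult_eq_carrier_if_meets_neg_translates:
  assumes "A \<subseteq> carrier G" "T \<subseteq> carrier G" "\<forall>x\<in>carrier G. neg_translate G x A \<inter> T \<noteq> {}"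
  shows "A <#> T = carrier G"
proof
  show "A <#> T \<subseteq> carrier G"
    using assms(1,2) by (rule set_mult_closed)
  show "carrier G \<subseteq> A <#> T"
  proof
    fix x assume x: "x \<in> carrier G"
    then obtain a where a: "a \<in> A" "x \<otimes> inv a \<in> T"
      using assms(3) by (auto simp: neg_translate_def)
    then have "a \<in> carrier G"
      using assms(1) by blast
    then have "x = a \<otimes> (x \<otimes> inv a)"
      using x by (simp add: m_lcomm[of a x "inv a"])
    then show "x \<in> A <#> T"
      using a unfolding set_mult_def by blast
  qed
qed

lemma (in comm_group) exists_small_set_mult_eq_carrier:
  fixes \<alpha> :: real
  assumes "finite (carrier G)" "A \<subseteq> carrier G" "\<alpha> * card (carrier G) \<le> card A" "vc_cayley G A \<le> d"
    and net: "\<forall>(U :: 'a set) F. finite U \<longrightarrow> U \<noteq> {} \<longrightarrow> (\<forall>S\<in>F. S \<subseteq> U \<and> \<alpha> * card U \<le> card S) \<longrightarrow>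
      (\<forall>Y\<subseteq>U. shatters F Y \<longrightarrow> card Y \<le> d) \<longrightarrow> (\<exists>T\<subseteq>U. card T \<le> N \<and> (\<forall>S\<in>F. S \<inter> T \<noteq> {}))"
  shows "\<exists>T. T \<subseteq> carrier G \<and> card T \<le> N \<and> A <#> T = carrier G"
proof -
  let ?F = "(\<lambda>x. neg_translate G x A) ` carrier G"
  have dense: "\<forall>S\<in>?F. S \<subseteq> carrier G \<and> \<alpha> * card (carrier G) \<le> card S"
    using assms(2,3) neg_translate_subset card_neg_translate by auto
  have vc: "\<forall>Y\<subseteq>carrier G. shatters ?F Y \<longrightarrow> card Y \<le> d"
  proof (intro allI impI)
    fix Y assume "Y \<subseteq> carrier G" "shatters ?F Y"
    then have "card Y \<le> vc_cayley G A"
      unfolding vc_cayley_def by (rule card_le_vc_dim[OF assms(1)])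
    then show "card Y \<le> d"
      using assms(4) by (rule order_trans)
  qed
  have "carrier G \<noteq> {}"
    using one_closed by blast
  then obtain T where T: "T \<subseteq> carrier G" "card T \<le> N" "\<forall>S\<in>?F. S \<inter> T \<noteq> {}"
    using net[rule_format (no_asm), OF assms(1) _ dense vc] by blast
  then have "\<forall>x\<in>carrier G. neg_translate G x A \<inter> T \<noteq> {}"
    by blast
  then have "A <#> T = carrier G"
    by (rule set_mult_eq_carrier_if_meets_neg_translates[OF assms(2) T(1)])
  with T show ?thesis
    by blast
qed

lemma vc_cayley_bounded_if_delta_VC_less:
  fixes \<G> :: "('a, 'b) monoid_scheme set" and \<alpha> :: real
  assumes "\<forall>G\<in>\<G>. group G \<and> finite (carrier G)" and "delta_VC \<G> cs < \<alpha>"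
  obtains C :: nat where "\<forall>G\<in>\<G>. \<forall>A. A \<subseteq> carrier G \<and> solution_free G cs A
    \<and> real (card A) \<ge> \<alpha> * real (card (carrier G)) \<longrightarrow> vc_cayley G A \<le> C"
proof -
  define D where "D = {\<alpha>. \<alpha> \<ge> 0 \<and> (\<exists>C::nat. \<forall>G\<in>\<G>. \<forall>A. A \<subseteq> carrier G \<and> solution_free G cs A
    \<and> real (card A) \<ge> \<alpha> * real (card (carrier G)) \<longrightarrow> vc_cayley G A \<le> C)}"
  have small: "real (card A) < 2 * real (card (carrier G))" if "G \<in> \<G>" "A \<subseteq> carrier G" for G and A :: "'a set"
    using assms(1) that group.card_lt_double_card_carrier by blast
  have "2 \<in> D"
    unfolding D_def
  proof (intro CollectI conjI exI[of _ 0] ballI allI impI)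
    fix G A
    assume "G \<in> \<G>" and A: "A \<subseteq> carrier G \<and> solution_free G cs A \<and> real (card A) \<ge> 2 * real (card (carrier G))"
    then show "vc_cayley G A \<le> 0"
      using small[of G A] by simp
  qed simp
  moreover have "Inf D < \<alpha>"
    using assms(2) unfolding delta_VC_def D_def .
  ultimately obtain \<beta> where "\<beta> \<in> D" "\<beta> < \<alpha>"
    using cInf_lessD[of D \<alpha>] by blast
  then obtain C where C: "\<forall>G\<in>\<G>. \<forall>A. A \<subseteq> carrier G \<and> solution_free G cs A
    \<and> real (card A) \<ge> \<beta> * real (card (carrier G)) \<longrightarrow> vc_cayley G A \<le> C"
    unfolding D_def by blast
  show thesis
  proof (rule that, intro ballI allI impI)
    fix G A
    assume "G \<in> \<G>" and A: "A \<subseteq> carrier G \<and> solution_free G cs A \<and> real (card A) \<ge> \<alpha> * real (card (carrier G))"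
    have "\<beta> * real (card (carrier G)) \<le> \<alpha> * real (card (carrier G))"
      using \<open>\<beta> < \<alpha>\<close> by (intro mult_right_mono) auto
    then show "vc_cayley G A \<le> C"
      using C \<open>G \<in> \<G>\<close> A by auto
  qed
qed

theorem proposition6p1:
  fixes cs :: "int list" and \<G> :: "'a monoid set"
  assumes "length cs \<ge> 3"
    and "\<forall>c\<in>set cs. c \<noteq> 0"
    and "\<forall>G\<in>\<G>. comm_group G \<and> finite (carrier G)"
    and "delta_VC \<G> cs = 0"
  shows "\<forall>\<alpha>>0. \<exists>K::nat. \<forall>G\<in>\<G>. \<forall>A. A \<subseteq> carrier G \<and> solution_free G cs A
            \<and> real (card A) \<ge> \<alpha> * real (card (carrier G)) \<longrightarrow>
            (\<exists>T. T \<subseteq> carrier G \<and> card T \<le> K \<and> A <#>\<^bsub>G\<^esub> T = carrier G)"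
proof (intro allI impI)
  fix \<alpha> :: real
  assume "\<alpha> > 0"
  have "\<forall>G\<in>\<G>. group G \<and> finite (carrier G)"
    using assms(3) comm_group.axioms(2) by blast
  moreover have "delta_VC \<G> cs < \<alpha>"
    using assms(4) \<open>\<alpha> > 0\<close> by simp
  ultimately obtain C where C: "\<forall>G\<in>\<G>. \<forall>A. A \<subseteq> carrier G \<and> solution_free G cs A
      \<and> real (card A) \<ge> \<alpha> * real (card (carrier G)) \<longrightarrow> vc_cayley G A \<le> C"
    by (rule vc_cayley_bounded_if_delta_VC_less)
  obtain N where N: "\<forall>(U :: 'a set) F. finite U \<longrightarrow> U \<noteq> {} \<longrightarrow> (\<forall>S\<in>F. S \<subseteq> U \<and> \<alpha> * card U \<le> card S) \<longrightarrow>
      (\<forall>Y\<subseteq>U. shatters F Y \<longrightarrow> card Y \<le> C) \<longrightarrow> (\<exists>T\<subseteq>U. card T \<le> N \<and> (\<forall>S\<in>F. S \<inter> T \<noteq> {}))"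
    using epsilon_net[OF \<open>\<alpha> > 0\<close>] by (rule exE)
  show "\<exists>K::nat. \<forall>G\<in>\<G>. \<forall>A. A \<subseteq> carrier G \<and> solution_free G cs A
      \<and> real (card A) \<ge> \<alpha> * real (card (carrier G)) \<longrightarrow>
      (\<exists>T. T \<subseteq> carrier G \<and> card T \<le> K \<and> A <#>\<^bsub>G\<^esub> T = carrier G)"
  proof (intro exI[of _ N] ballI allI impI)
    fix G and A :: "'a set"
    assume G: "G \<in> \<G>" and A: "A \<subseteq> carrier G \<and> solution_free G cs A
      \<and> real (card A) \<ge> \<alpha> * real (card (carrier G))"
    interpret comm_group G
      using assms(3) G by blast
    show "\<exists>T. T \<subseteq> carrier G \<and> card T \<le> N \<and> A <#>\<^bsub>G\<^esub> T = carrier G"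
      using assms(3) G A C N by (intro exists_small_set_mult_eq_carrier) auto
  qed
qed

end
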